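(* Let $G_0^*$ be a $(k,r)$-regular hypergraph on $n$ vertices, and list the eigenvalues of $A(G_0^* )$ with multiplicity as $\lambda_1=r(k-1),\lambda_2,\dots,\lambda_n$. Let $b=\binom{n-1}{k-2}$, $N_j=n(n+1)^{j-1}$, and define matrices recursively by $\mathcal{A}^{(1)}=A(G_0^* )$ and, for $m\ge 2$, $$\mathcal{A}^{(m)}=\begin{bmatrix}\mathcal{A}^{(m-1)} & b\,(J_{1,n}\otimes I_{N_{m-1}})\\ b\,(J_{n,1}\otimes I_{N_{m-1}}) & A(G_0^* )\otimes I_{N_{m-1}}\end{bmatrix}$$ (an $N_m\times N_m$ matrix; it is the corona matrix of the hypergraph represented by $\mathcal{A}^{(m-1)}$ with $G_0^*$). Define $\phi_\pm(x)=\frac{x+r(k-1)\pm\sqrt{(x-r(k-1))^2+4nb^2}}{2}$, and for real $x$ define multisets $\Phi^0(x)=\{x\}$ and $\Phi^j(x)=\biguplus_{y\in\Phi^{j-1}(x)}\{\phi_+(y),\phi_-(y)\}$ for $j\ge1$ (so $\Phi^j(x)$ has $2^j$ elements counted with multiplicity). Then for every $m\ge1$ the spectrum of $\mathcal{A}^{(m)}$, as a multiset, is $$\biguplus_{i=1}^n\Phi^{m-1}(\lambda_i)\ \uplus\ \biguplus_{j=0}^{m-2}\ \biguplus_{i=2}^n\ \big(\Phi^j(\lambda_i)\text{ taken } n(n+1)^{m-j-2}\text{ times}\big).$$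
   Context: All hypergraphs are finite and simple: a hypergraph $G^*=(V,E)$ consists of a finite vertex set $V$ and a set $E$ of subsets of $V$ (hyperedges), each of size at least $2$. It is $k$-uniform if every hyperedge has exactly $k$ elements, and $(k,r)$-regular if it is $k$-uniform and every vertex lies in exactly $r$ hyperedges. For a hypergraph with vertices $v_1,\dots,v_n$, the adjacency matrix $A(G^* )$ is the $n\times n$ matrix whose $(i,j)$ entry, for $i\ne j$, is the number of hyperedges containing both $v_i$ and $v_j$, and whose diagonal entries are $0$. $J_{a,b}$ is the all-ones $a\times b$ matrix, $I_N$ the identity, $\otimes$ the Kronecker product, $\uplus$ multiset union. Binomial coefficients $\binom{x}{y}$ with integers $x\ge 0$ and $y$ are $0$ when $y<0$ or $y>x$. *)

theory Defs
  imports "Jordan_Normal_Form.Char_Poly" "HOL-Library.Multiset"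
begin

definition hypergraph :: "nat \<Rightarrow> nat set set \<Rightarrow> bool" where
  "hypergraph n E \<longleftrightarrow> (\<forall>e\<in>E. e \<subseteq> {0..<n} \<and> card e \<ge> 2)"

definition kr_regular :: "nat \<Rightarrow> nat \<Rightarrow> nat \<Rightarrow> nat set set \<Rightarrow> bool" where
  "kr_regular k r n E \<longleftrightarrow> hypergraph n E \<and> (\<forall>e\<in>E. card e = k)
     \<and> (\<forall>v<n. card {e\<in>E. v \<in> e} = r)"

definition hyp_adj :: "nat \<Rightarrow> nat set set \<Rightarrow> real mat" where
  "hyp_adj n E = mat n n (\<lambda>(i,j). if i = j then 0 else real (card {e\<in>E. i \<in> e \<and> j \<in> e}))"

definition ones_mat :: "nat \<Rightarrow> nat \<Rightarrow> real mat" where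
  "ones_mat a c = mat a c (\<lambda>_. 1)"

definition kron :: "real mat \<Rightarrow> real mat \<Rightarrow> real mat" where
  "kron A B = mat (dim_row A * dim_row B) (dim_col A * dim_col B)
     (\<lambda>(i,j). A $$ (i div dim_row B, j div dim_col B) * B $$ (i mod dim_row B, j mod dim_col B))"

text \<open>corona_iter A b m is the matrix \<A>^{(m+1)} of the paper.\<close>
primrec corona_iter :: "real mat \<Rightarrow> real \<Rightarrow> nat \<Rightarrow> real mat" where
  "corona_iter A b 0 = A"
| "corona_iter A b (Suc m) =
     (let M = corona_iter A b m; N = dim_row M; n = dim_row A in
      four_block_mat M (b \<cdot>\<^sub>m kron (ones_mat 1 n) (1\<^sub>m N))
                       (b \<cdot>\<^sub>m kron (ones_mat n 1) (1\<^sub>m N))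
                       (kron A (1\<^sub>m N)))"

definition is_spectrum :: "real mat \<Rightarrow> real multiset \<Rightarrow> bool" where
  "is_spectrum A M \<longleftrightarrow> char_poly A = (\<Prod>a\<in>#M. [:-a, 1:])"

primrec Phi :: "(real \<Rightarrow> real) \<Rightarrow> (real \<Rightarrow> real) \<Rightarrow> nat \<Rightarrow> real \<Rightarrow> real multiset" where
  "Phi fp fm 0 x = {#x#}"
| "Phi fp fm (Suc j) x = (\<Sum>y\<in>#Phi fp fm j x. {#fp y, fm y#})"

end

theory Submission
  imports Defs "Jordan_Normal_Form.Schur_Decomposition" "Jordan_Normal_Form.Jordan_Normal_Form_Uniqueness"
begin

text \<open>
  Write the corona matrix as \<open>C = [[M, b K\<^sub>1], [b K\<^sub>2, A \<otimes> I\<^sub>N]]\<close> with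
  \<open>K\<^sub>1 = J\<^sub>1\<^sub>,\<^sub>n \<otimes> I\<^sub>N\<close>, \<open>K\<^sub>2 = J\<^sub>n\<^sub>,\<^sub>1 \<otimes> I\<^sub>N\<close>.
  Regularity makes the all-ones vector an eigenvector of \<open>A\<close> for \<open>\<lambda> = r(k-1)\<close>, so the columns
  of \<open>K\<^sub>2\<close> are eigenvectors of \<open>x I - A \<otimes> I\<^sub>N\<close> for \<open>x - \<lambda>\<close>. Eliminating the lower left block
  therefore gives, for \<open>x \<noteq> \<lambda>\<close>,
  \<open>det (x I - C) = det ((x - n b\<^sup>2 / (x - \<lambda>)) I - M) \<cdot> det (x I - A)\<^sup>N\<close>,
  where \<open>det (x I - A \<otimes> I\<^sub>N) = det (x I - A)\<^sup>N\<close> follows from a Schur triangularisation of \<open>A\<close>.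
  Distributing \<open>N\<close> of the factors \<open>x - \<lambda>\<close> over the \<open>N\<close> eigenvalues \<open>\<mu>\<close> of \<open>M\<close> turns each
  \<open>(x - \<mu>)(x - \<lambda>) - n b\<^sup>2\<close> into \<open>(x - \<phi>\<^sub>+ \<mu>)(x - \<phi>\<^sub>- \<mu>)\<close>: every eigenvalue of \<open>M\<close> splits into
  its two images, and \<open>\<lambda>\<^sub>2, \<dots>, \<lambda>\<^sub>n\<close> are added \<open>N\<close> times.
\<close>

lemma dim_kron [simp]:
  "dim_row (kron A B) = dim_row A * dim_row B" "dim_col (kron A B) = dim_col A * dim_col B"
  unfolding kron_def by auto

lemma kron_carrier_mat:
  "A \<in> carrier_mat a c \<Longrightarrow> B \<in> carrier_mat d e \<Longrightarrow> kron A B \<in> carrier_mat (a * d) (c * e)"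
  unfolding carrier_mat_def by auto

lemma index_kron_one_mat:
  assumes "i < dim_row A * N" "j < dim_col A * N"
  shows "kron A (1\<^sub>m N) $$ (i, j) = (if i mod N = j mod N then A $$ (i div N, j div N) else 0)"
  using assms unfolding kron_def by (cases N) auto

lemma mult_add_less_mult: "a < c \<Longrightarrow> t < N \<Longrightarrow> a * N + t < c * (N::nat)"
  using mult_le_mono1[of "Suc a" c N] by simp

lemma sum_lessThan_mult_split:
  fixes g :: "nat \<Rightarrow> 'a::comm_monoid_add"
  shows "(\<Sum>k<c * N. g k) = (\<Sum>a<c. \<Sum>t<N. g (a * N + t))"
proof -
  have block: "sum g {a * N..<a * N + N} = (\<Sum>t<N. g (a * N + t))" for a
    using sum.shift_bounds_nat_ivl[of g 0 "a * N" N] by (simp add: atLeast0LessThan add.commute)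
  show ?thesis
    by (simp only: sum.nat_group[symmetric] block)
qed

lemma kron_one_mat_mult:
  assumes A: "A \<in> carrier_mat a c" and B: "B \<in> carrier_mat c d"
  shows "kron A (1\<^sub>m N) * kron B (1\<^sub>m N) = kron (A * B) (1\<^sub>m N)"
proof (rule eq_matI)
  fix i j assume "i < dim_row (kron (A * B) (1\<^sub>m N))" "j < dim_col (kron (A * B) (1\<^sub>m N))"
  with A B have i: "i < a * N" and j: "j < d * N" by auto
  then have N: "N > 0" by (cases N) auto
  have "(kron A (1\<^sub>m N) * kron B (1\<^sub>m N)) $$ (i, j)
      = (\<Sum>l<c * N. kron A (1\<^sub>m N) $$ (i, l) * kron B (1\<^sub>m N) $$ (l, j))"
    using i j A B by (simp add: scalar_prod_def atLeast0LessThan[symmetric])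
  also have "\<dots> = (\<Sum>l<c. \<Sum>t<N. kron A (1\<^sub>m N) $$ (i, l * N + t) * kron B (1\<^sub>m N) $$ (l * N + t, j))"
    by (rule sum_lessThan_mult_split)
  also have "\<dots> = (\<Sum>l<c. \<Sum>t<N. if t = i mod N then
      (if i mod N = j mod N then A $$ (i div N, l) * B $$ (l, j div N) else 0) else 0)"
  proof (intro sum.cong refl)
    fix l t assume "l \<in> {..<c}" "t \<in> {..<N}"
    then have "l * N + t < c * N" and "(l * N + t) div N = l" and "(l * N + t) mod N = t"
      by (auto simp: mult_add_less_mult)
    then show "kron A (1\<^sub>m N) $$ (i, l * N + t) * kron B (1\<^sub>m N) $$ (l * N + t, j) =
      (if t = i mod N then (if i mod N = j mod N then A $$ (i div N, l) * B $$ (l, j div N) else 0) else 0)"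
      using index_kron_one_mat[of i A N "l * N + t"] index_kron_one_mat[of "l * N + t" B N j] A B i j
      by auto
  qed
  also have "\<dots> = (\<Sum>l<c. if i mod N = j mod N then A $$ (i div N, l) * B $$ (l, j div N) else 0)"
    using N by (simp add: sum.delta)
  also have "\<dots> = (if i mod N = j mod N then (A * B) $$ (i div N, j div N) else 0)"
    using A B i j
    by (cases "i mod N = j mod N") (simp_all add: scalar_prod_def atLeast0LessThan less_mult_imp_div_less)
  also have "\<dots> = kron (A * B) (1\<^sub>m N) $$ (i, j)"
    using index_kron_one_mat[of i "A * B" N j] i j A B by simp
  finally show "(kron A (1\<^sub>m N) * kron B (1\<^sub>m N)) $$ (i, j) = kron (A * B) (1\<^sub>m N) $$ (i, j)" .
qed (use A B in auto)

lemma kron_one_mat_one: "kron (1\<^sub>m n) (1\<^sub>m N) = 1\<^sub>m (n * N)"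
proof (rule eq_matI)
  fix i j assume "i < dim_row (1\<^sub>m (n * N))" "j < dim_col (1\<^sub>m (n * N))"
  moreover have "i div N = j div N \<Longrightarrow> i mod N = j mod N \<Longrightarrow> i = j"
    by (metis div_mult_mod_eq)
  ultimately show "kron (1\<^sub>m n) (1\<^sub>m N) $$ (i, j) = 1\<^sub>m (n * N) $$ (i, j)"
    using index_kron_one_mat[of i "1\<^sub>m n" N j] by (auto simp: less_mult_imp_div_less)
qed auto

lemma kron_one_mat_minus:
  assumes "A \<in> carrier_mat a c" "B \<in> carrier_mat a c"
  shows "kron (A - B) (1\<^sub>m N) = kron A (1\<^sub>m N) - kron B (1\<^sub>m N)"
  by (rule eq_matI) (use assms in \<open>auto simp: index_kron_one_mat less_mult_imp_div_less\<close>)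

lemma kron_one_mat_smult: "kron (x \<cdot>\<^sub>m A) (1\<^sub>m N) = x \<cdot>\<^sub>m kron A (1\<^sub>m N)"
  by (rule eq_matI) (auto simp: index_kron_one_mat less_mult_imp_div_less)

lemma similar_mat_wit_kron_one_mat:
  assumes "similar_mat_wit A B P Q"
  shows "similar_mat_wit (kron A (1\<^sub>m N)) (kron B (1\<^sub>m N)) (kron P (1\<^sub>m N)) (kron Q (1\<^sub>m N))"
proof -
  define n where "n = dim_row A"
  note wit = similar_mat_witD[OF n_def assms]
  note kron_mult = kron_one_mat_mult[of _ n n _ n N]
  have "kron A (1\<^sub>m N) = kron (P * B) (1\<^sub>m N) * kron Q (1\<^sub>m N)"
    using wit kron_mult[of "P * B" Q] by simp
  also have "kron (P * B) (1\<^sub>m N) = kron P (1\<^sub>m N) * kron B (1\<^sub>m N)"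
    using wit kron_mult[of P B] by simp
  finally show ?thesis
    using wit kron_mult[of P Q] kron_mult[of Q P]
    by (intro similar_mat_witI[of _ _ "n * N"]) (auto simp: kron_one_mat_one kron_carrier_mat)
qed

lemma upper_triangular_kron_one_mat:
  assumes "U \<in> carrier_mat n n" "upper_triangular U"
  shows "upper_triangular (kron U (1\<^sub>m N))"
  unfolding upper_triangular_def
proof (intro allI impI)
  fix i j assume i: "i < dim_row (kron U (1\<^sub>m N))" and ji: "j < i"
  have "j div N \<le> i div N"
    using ji by (simp add: div_le_mono)
  moreover have "j mod N \<noteq> i mod N" if "j div N = i div N"
    using ji that by (metis div_mult_mod_eq less_irrefl)
  ultimately have "j div N < i div N \<or> j mod N \<noteq> i mod N"
    by linarith
  then show "kron U (1\<^sub>m N) $$ (i, j) = 0"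
    using index_kron_one_mat[of i U N j] i ji assms
    by (auto simp: upper_triangular_def less_mult_imp_div_less)
qed

lemma det_kron_one_mat_upper_triangular:
  assumes U: "U \<in> carrier_mat n n" and ut: "upper_triangular U"
  shows "det (kron U (1\<^sub>m N)) = det U ^ N"
proof -
  have diag: "kron U (1\<^sub>m N) $$ (a * N + t, a * N + t) = U $$ (a, a)" if "a < n" "t < N" for a t
  proof -
    have "a * N + t < n * N" using that by (rule mult_add_less_mult)
    then show ?thesis using index_kron_one_mat[of "a * N + t" U N "a * N + t"] U that by simp
  qed
  have "det (kron U (1\<^sub>m N)) = (\<Prod>i<n * N. kron U (1\<^sub>m N) $$ (i, i))"
    using det_upper_triangular[OF upper_triangular_kron_one_mat[OF U ut] kron_carrier_mat[OF U one_carrier_mat]] U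
    by (simp add: prod_list_diag_prod atLeast0LessThan)
  also have "\<dots> = (\<Prod>a<n. \<Prod>t<N. kron U (1\<^sub>m N) $$ (a * N + t, a * N + t))"
    by (simp add: prod.nat_group[symmetric] prod.shift_bounds_nat_ivl[of _ 0 _ N, simplified]
        atLeast0LessThan add.commute)
  also have "\<dots> = (\<Prod>a<n. U $$ (a, a)) ^ N"
    by (simp add: diag prod_power_distrib)
  also have "(\<Prod>a<n. U $$ (a, a)) = det U"
    using det_upper_triangular[OF ut U] U by (simp add: prod_list_diag_prod atLeast0LessThan)
  finally show ?thesis .
qed

lemma det_kron_one_mat:
  assumes "similar_mat A U" "upper_triangular U"
  shows "det (kron A (1\<^sub>m N)) = det A ^ N"
proof -
  obtain P Q where wit: "similar_mat_wit A U P Q"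
    using assms(1) unfolding similar_mat_def by blast
  define n where "n = dim_row A"
  have U: "U \<in> carrier_mat n n"
    by (rule similar_mat_witD(5)[OF n_def wit])
  have "similar_mat (kron A (1\<^sub>m N)) (kron U (1\<^sub>m N))"
    unfolding similar_mat_def using similar_mat_wit_kron_one_mat[OF wit] by blast
  then have "det (kron A (1\<^sub>m N)) = det (kron U (1\<^sub>m N))"
    by (rule det_similar)
  also have "\<dots> = det U ^ N"
    by (rule det_kron_one_mat_upper_triangular[OF U assms(2)])
  also have "det U = det A"
    using det_similar[OF assms(1)] by simp
  finally show ?thesis .
qed

lemma similar_mat_wit_shift:
  fixes A :: "'a::field mat"
  assumes A: "A \<in> carrier_mat n n" and wit: "similar_mat_wit A B P Q"
  shows "similar_mat_wit (x \<cdot>\<^sub>m 1\<^sub>m n - A) (x \<cdot>\<^sub>m 1\<^sub>m n - B) P Q"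
proof -
  have B: "B \<in> carrier_mat n n"
    using similar_mat_witD2[OF A wit] by simp
  have shift: "x \<cdot>\<^sub>m 1\<^sub>m n - C = (-1) \<cdot>\<^sub>m char_matrix C x" if "C \<in> carrier_mat n n" for C
    using that by (intro eq_matI) (auto simp: char_matrix_def)
  show ?thesis
    using similar_mat_wit_smult[OF similar_mat_wit_char_matrix[OF wit], of "-1"]
    by (simp add: shift[OF A] shift[OF B])
qed

lemma det_kron_one_mat_shift:
  fixes A :: "real mat"
  assumes A: "A \<in> carrier_mat n n" and split: "char_poly A = (\<Prod>a\<leftarrow>es. [:- a, 1:])"
  shows "det (kron (x \<cdot>\<^sub>m 1\<^sub>m n - A) (1\<^sub>m N)) = det (x \<cdot>\<^sub>m 1\<^sub>m n - A) ^ N"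
proof -
  obtain U where U: "U \<in> carrier_mat n n" "upper_triangular U" and "similar_mat A U"
    using schur_decomposition_exists[OF A split] by blast
  then obtain P Q where "similar_mat_wit A U P Q"
    unfolding similar_mat_def by blast
  then have "similar_mat (x \<cdot>\<^sub>m 1\<^sub>m n - A) (x \<cdot>\<^sub>m 1\<^sub>m n - U)"
    unfolding similar_mat_def using similar_mat_wit_shift[OF A] by blast
  moreover have "upper_triangular (x \<cdot>\<^sub>m 1\<^sub>m n - U)"
    using U by (auto simp: upper_triangular_def)
  ultimately show ?thesis
    by (rule det_kron_one_mat)
qed

lemma det_four_block_mat_eliminate:
  fixes A :: "'a::idom mat"
  assumes A: "A \<in> carrier_mat n n" and B: "B \<in> carrier_mat n m"
    and C: "C \<in> carrier_mat m n" and D: "D \<in> carrier_mat m m"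
    and Y: "Y \<in> carrier_mat m n" and CDY: "C + D * Y = 0\<^sub>m m n"
  shows "det (four_block_mat A B C D) = det (A + B * Y) * det D"
proof -
  define R where "R = four_block_mat (1\<^sub>m n) (0\<^sub>m n m) Y (1\<^sub>m m)"
  have R: "R \<in> carrier_mat (n + m) (n + m)"
    unfolding R_def using Y by simp
  have "det R = 1"
    unfolding R_def using det_four_block_mat_upper_right_zero[of "1\<^sub>m n" n "0\<^sub>m n m" m Y] Y by simp
  moreover have "four_block_mat A B C D * R = four_block_mat (A + B * Y) B (0\<^sub>m m n) D"
    unfolding R_def mult_four_block_mat[OF A B C D one_carrier_mat zero_carrier_mat Y one_carrier_mat]
    using A B C D Y CDY by simp
  moreover have "four_block_mat A B C D \<in> carrier_mat (n + m) (n + m)"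
    using A D by simp
  ultimately have "det (four_block_mat A B C D) = det (four_block_mat (A + B * Y) B (0\<^sub>m m n) D)"
    using det_mult[OF _ R, of "four_block_mat A B C D"] by simp
  also have "\<dots> = det (A + B * Y) * det D"
    using A B D Y by (intro det_four_block_mat_lower_left_zero[of _ n _ m]) auto
  finally show ?thesis .
qed

definition corona_mat :: "real mat \<Rightarrow> real mat \<Rightarrow> real \<Rightarrow> real mat" where
  "corona_mat M A b = (let N = dim_row M; n = dim_row A in
     four_block_mat M (b \<cdot>\<^sub>m kron (ones_mat 1 n) (1\<^sub>m N))
                      (b \<cdot>\<^sub>m kron (ones_mat n 1) (1\<^sub>m N))
                      (kron A (1\<^sub>m N)))"

lemma corona_iter_Suc_corona_mat:
  "corona_iter A b (Suc m) = corona_mat (corona_iter A b m) A b"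
  by (simp add: corona_mat_def Let_def)

lemma dim_ones_mat [simp]: "dim_row (ones_mat a c) = a" "dim_col (ones_mat a c) = c"
  unfolding ones_mat_def by simp_all

lemma ones_mat_carrier [simp]: "ones_mat a c \<in> carrier_mat a c"
  unfolding carrier_mat_def by simp

lemma ones_mat_mult_ones_mat: "ones_mat 1 n * ones_mat n 1 = real n \<cdot>\<^sub>m 1\<^sub>m 1"
  unfolding ones_mat_def by (intro eq_matI) (auto simp: scalar_prod_def)

lemma corona_mat_carrier:
  assumes "M \<in> carrier_mat N N" "A \<in> carrier_mat n n"
  shows "corona_mat M A b \<in> carrier_mat (N + n * N) (N + n * N)"
  using assms unfolding corona_mat_def by (simp add: kron_carrier_mat[OF _ one_carrier_mat])

lemma det_corona_mat:
  assumes M: "M \<in> carrier_mat N N" and A: "A \<in> carrier_mat n n"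
    and row: "A * ones_mat n 1 = lam \<cdot>\<^sub>m ones_mat n 1" and x: "x \<noteq> lam"
  shows "det (x \<cdot>\<^sub>m 1\<^sub>m (N + n * N) - corona_mat M A b) =
    det ((x - real n * b\<^sup>2 / (x - lam)) \<cdot>\<^sub>m 1\<^sub>m N - M) * det (kron (x \<cdot>\<^sub>m 1\<^sub>m n - A) (1\<^sub>m N))"
proof -
  define K1 where "K1 = kron (ones_mat 1 n) (1\<^sub>m N)"
  define K2 where "K2 = kron (ones_mat n 1) (1\<^sub>m N)"
  define D where "D = kron (x \<cdot>\<^sub>m 1\<^sub>m n - A) (1\<^sub>m N)"
  \<comment> \<open>chosen so that \<open>D * Y = b \<cdot> K2\<close> cancels the lower left block\<close>
  define Y where "Y = (b / (x - lam)) \<cdot>\<^sub>m K2"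
  have K1: "K1 \<in> carrier_mat N (n * N)" and K2: "K2 \<in> carrier_mat (n * N) N"
    unfolding K1_def K2_def
    using kron_carrier_mat[OF ones_mat_carrier one_carrier_mat, of _ _ N] by fastforce+
  have xA: "x \<cdot>\<^sub>m 1\<^sub>m n - A \<in> carrier_mat n n"
    using A by (rule minus_carrier_mat)
  have D: "D \<in> carrier_mat (n * N) (n * N)"
    unfolding D_def by (rule kron_carrier_mat[OF xA one_carrier_mat])
  have "D = x \<cdot>\<^sub>m 1\<^sub>m (n * N) - kron A (1\<^sub>m N)"
    unfolding D_def using A kron_one_mat_minus[of "x \<cdot>\<^sub>m 1\<^sub>m n" n n A N]
    by (simp add: kron_one_mat_smult kron_one_mat_one)
  then have block: "x \<cdot>\<^sub>m 1\<^sub>m (N + n * N) - corona_mat M A b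
      = four_block_mat (x \<cdot>\<^sub>m 1\<^sub>m N - M) ((-b) \<cdot>\<^sub>m K1) ((-b) \<cdot>\<^sub>m K2) D"
    using M A K1 K2 kron_carrier_mat[OF A one_carrier_mat, of N]
    unfolding corona_mat_def K1_def K2_def by (intro eq_matI) auto
  have K1K2: "K1 * K2 = real n \<cdot>\<^sub>m 1\<^sub>m N"
    unfolding K1_def K2_def kron_one_mat_mult[OF ones_mat_carrier ones_mat_carrier]
      ones_mat_mult_ones_mat kron_one_mat_smult kron_one_mat_one by simp
  have "(x \<cdot>\<^sub>m 1\<^sub>m n - A) * ones_mat n 1 = x \<cdot>\<^sub>m ones_mat n 1 - lam \<cdot>\<^sub>m ones_mat n 1"
    unfolding minus_mult_distrib_mat[OF smult_carrier_mat[OF one_carrier_mat] A ones_mat_carrier]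
      mult_smult_assoc_mat[OF one_carrier_mat ones_mat_carrier] row by simp
  also have "\<dots> = (x - lam) \<cdot>\<^sub>m ones_mat n 1"
    by (intro eq_matI) (auto simp: ones_mat_def)
  finally have DK2: "D * K2 = (x - lam) \<cdot>\<^sub>m K2"
    unfolding D_def K2_def kron_one_mat_mult[OF xA ones_mat_carrier] by (simp add: kron_one_mat_smult)
  have "(-b) \<cdot>\<^sub>m K2 + D * Y = 0\<^sub>m (n * N) N"
    unfolding Y_def mult_smult_distrib[OF D K2] DK2 using K2 x by (intro eq_matI) auto
  moreover have "(-b) \<cdot>\<^sub>m K1 * Y = (- (real n * b\<^sup>2 / (x - lam))) \<cdot>\<^sub>m 1\<^sub>m N"
    unfolding Y_def mult_smult_assoc_mat[OF K1 smult_carrier_mat[OF K2]] mult_smult_distrib[OF K1 K2] K1K2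
    by (intro eq_matI) (auto simp: power2_eq_square)
  then have "x \<cdot>\<^sub>m 1\<^sub>m N - M + (-b) \<cdot>\<^sub>m K1 * Y = (x - real n * b\<^sup>2 / (x - lam)) \<cdot>\<^sub>m 1\<^sub>m N - M"
    using M by (intro eq_matI) auto
  ultimately show ?thesis
    unfolding block D_def[symmetric]
    using M K1 K2 D by (subst det_four_block_mat_eliminate[of _ N _ "n * N" _ _ Y]) (auto simp: Y_def)
qed

lemma poly_char_poly_eq_det:
  fixes A :: "'a::field mat"
  assumes "A \<in> carrier_mat n n"
  shows "poly (char_poly A) x = det (x \<cdot>\<^sub>m 1\<^sub>m n - A)"
proof -
  have "- char_matrix A x = x \<cdot>\<^sub>m 1\<^sub>m n - A"
    using assms unfolding char_matrix_def by (intro eq_matI) auto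
  then show ?thesis
    using char_poly_matrix[OF assms] by simp
qed

lemma poly_prod_mset_linear: "poly (\<Prod>a\<in>#S. [:- a, 1:]) (x :: 'a::comm_ring_1) = (\<Prod>a\<in>#S. x - a)"
  by (induction S) (simp_all add: algebra_simps)

lemma prod_mset_repeat_mset: "(\<Prod>a\<in>#repeat_mset N L. f a) = (\<Prod>a\<in>#L. f a) ^ N"
  by (induction N) auto

lemma degree_prod_mset_linear: "degree (\<Prod>a\<in>#S. [:- a, 1 :: 'a::idom:]) = size S"
proof (induction S)
  case (add x S)
  have "degree ([:- x, 1:] * (\<Prod>a\<in>#S. [:- a, 1:])) = degree [:- x, 1:] + degree (\<Prod>a\<in>#S. [:- a, 1:])"
    by (rule degree_mult_eq) (auto simp: prod_mset_zero_iff)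
  then show ?case
    using add.IH by simp
qed simp

lemma poly_eqI_off_point:
  fixes p q :: "'a::{idom, ring_char_0} poly"
  assumes "\<And>x. x \<noteq> a \<Longrightarrow> poly p x = poly q x"
  shows "p = q"
proof (rule ccontr)
  assume "p \<noteq> q"
  then have "finite {x. poly (p - q) x = 0}"
    by (intro poly_roots_finite) simp
  moreover have "UNIV - {a} \<subseteq> {x. poly (p - q) x = 0}"
    using assms by auto
  ultimately show False
    using infinite_UNIV_char_0 finite_subset by (metis finite_insert insert_Diff_single insert_UNIV)
qed

lemma quadratic_factorization_sqrt:
  fixes x mu lam c :: real
  assumes "c \<ge> 0"
  shows "(x - mu) * (x - lam) - c =
    (x - (mu + lam + sqrt ((mu - lam)\<^sup>2 + 4 * c)) / 2) * (x - (mu + lam - sqrt ((mu - lam)\<^sup>2 + 4 * c)) / 2)"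
proof -
  have "(sqrt ((mu - lam)\<^sup>2 + 4 * c))\<^sup>2 = (mu - lam)\<^sup>2 + 4 * c"
    using assms by simp
  then show ?thesis
    by (simp add: field_simps power2_eq_square)
qed

lemma char_poly_corona_mat:
  fixes M A :: "real mat" and S L :: "real multiset" and b :: real
  assumes M: "M \<in> carrier_mat N N" and A: "A \<in> carrier_mat n n"
    and row: "A * ones_mat n 1 = lam \<cdot>\<^sub>m ones_mat n 1"
    and spec_M: "char_poly M = (\<Prod>a\<in>#S. [:- a, 1:])"
    and spec_A: "char_poly A = (\<Prod>a\<in>#add_mset lam L. [:- a, 1:])"
  defines "fp \<equiv> \<lambda>y. (y + lam + sqrt ((y - lam)\<^sup>2 + 4 * real n * b\<^sup>2)) / 2"
    and "fm \<equiv> \<lambda>y. (y + lam - sqrt ((y - lam)\<^sup>2 + 4 * real n * b\<^sup>2)) / 2"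
  shows "char_poly (corona_mat M A b) =
    (\<Prod>a\<in>#image_mset fp S + image_mset fm S + repeat_mset N L. [:- a, 1:])"
proof (rule poly_eqI_off_point[of lam])
  fix x assume x: "x \<noteq> lam"
  define y where "y = x - real n * b\<^sup>2 / (x - lam)"
  have size_S: "size S = N"
    using degree_monic_char_poly[OF M] spec_M degree_prod_mset_linear[of S] by simp
  obtain es where split_A: "char_poly A = (\<Prod>a\<leftarrow>es. [:- a, 1:])"
    using ex_mset[of "add_mset lam L"] spec_A by (metis mset_map prod_mset_prod_list)
  have factor: "(y - a) * (x - lam) = (x - fp a) * (x - fm a)" for a
  proof -
    have "(y - a) * (x - lam) = (x - a) * (x - lam) - real n * b\<^sup>2"
      using x by (simp add: y_def field_simps)
    then show ?thesis
      unfolding fp_def fm_def by (simp add: quadratic_factorization_sqrt add.commute mult.assoc)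
  qed
  have "poly (char_poly (corona_mat M A b)) x = det (x \<cdot>\<^sub>m 1\<^sub>m (N + n * N) - corona_mat M A b)"
    by (rule poly_char_poly_eq_det[OF corona_mat_carrier[OF M A]])
  also have "\<dots> = det (y \<cdot>\<^sub>m 1\<^sub>m N - M) * det (kron (x \<cdot>\<^sub>m 1\<^sub>m n - A) (1\<^sub>m N))"
    unfolding y_def by (rule det_corona_mat[OF M A row x])
  also have "\<dots> = poly (char_poly M) y * poly (char_poly A) x ^ N"
    by (simp add: det_kron_one_mat_shift[OF A split_A] poly_char_poly_eq_det[OF M] poly_char_poly_eq_det[OF A])
  \<comment> \<open>one factor \<open>x - lam\<close> per eigenvalue of \<open>M\<close>, as \<open>size S = N\<close>\<close>
  also have "\<dots> = (\<Prod>a\<in>#S. (y - a) * (x - lam)) * (\<Prod>a\<in>#L. x - a) ^ N"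
    unfolding spec_M spec_A poly_prod_mset_linear
    by (simp add: prod_mset.distrib power_mult_distrib size_S)
  also have "\<dots> = (\<Prod>a\<in>#S. (x - fp a) * (x - fm a)) * (\<Prod>a\<in>#L. x - a) ^ N"
    by (simp add: factor)
  also have "\<dots> = poly (\<Prod>a\<in>#image_mset fp S + image_mset fm S + repeat_mset N L. [:- a, 1:]) x"
    unfolding poly_prod_mset_linear
    by (simp only: image_mset_union prod_mset.union prod_mset.distrib multiset.map_comp comp_def
        prod_mset_repeat_mset)
  finally show "poly (char_poly (corona_mat M A b)) x = \<dots>" .
qed

lemma hyp_adj_carrier: "hyp_adj n E \<in> carrier_mat n n"
  unfolding hyp_adj_def by simp

lemma kr_regular_codegree_sum:
  assumes reg: "kr_regular k r n E" and i: "i < n"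
  shows "(\<Sum>j\<in>{0..<n} - {i}. card {e\<in>E. i \<in> e \<and> j \<in> e}) = r * (k - 1)"
proof -
  have sub: "e \<subseteq> {0..<n}" and card_e: "card e = k" if "e \<in> E" for e
    using reg that unfolding kr_regular_def hypergraph_def by auto
  have deg: "card {e\<in>E. i \<in> e} = r"
    using reg i unfolding kr_regular_def by auto
  have fin: "finite E"
    using finite_subset[of E "Pow {0..<n}"] sub by auto
  have row: "card (({0..<n} - {i}) \<inter> {j. i \<in> e \<and> j \<in> e}) = of_bool (i \<in> e) * (k - 1)"
    if "e \<in> E" for e
  proof -
    have "({0..<n} - {i}) \<inter> {j. i \<in> e \<and> j \<in> e} = (if i \<in> e then e - {i} else {})"
      using sub[OF that] by auto
    then show ?thesis
      using card_e[OF that] finite_subset[OF sub[OF that]] by simp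
  qed
  have "(\<Sum>j\<in>{0..<n} - {i}. card {e\<in>E. i \<in> e \<and> j \<in> e})
      = (\<Sum>j\<in>{0..<n} - {i}. \<Sum>e\<in>E. of_bool (i \<in> e \<and> j \<in> e))"
    using fin by (simp add: Int_def)
  also have "\<dots> = (\<Sum>e\<in>E. \<Sum>j\<in>{0..<n} - {i}. of_bool (i \<in> e \<and> j \<in> e))"
    by (rule sum.swap)
  also have "\<dots> = (\<Sum>e\<in>E. of_bool (i \<in> e) * (k - 1))"
    by (simp add: row)
  also have "\<dots> = card {e\<in>E. i \<in> e} * (k - 1)"
    using fin by (simp add: Int_def)
  finally show ?thesis
    using deg by simp
qed

lemma hyp_adj_mult_ones:
  assumes reg: "kr_regular k r n E"
  shows "hyp_adj n E * ones_mat n 1 = real (r * (k - 1)) \<cdot>\<^sub>m ones_mat n 1"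
proof (rule eq_matI)
  fix i j assume "i < dim_row (real (r * (k - 1)) \<cdot>\<^sub>m ones_mat n 1)"
    and "j < dim_col (real (r * (k - 1)) \<cdot>\<^sub>m ones_mat n 1)"
  then have i: "i < n" and j: "j = 0" by auto
  have "(hyp_adj n E * ones_mat n 1) $$ (i, j) = (\<Sum>l\<in>{0..<n}. hyp_adj n E $$ (i, l))"
    using i j unfolding ones_mat_def hyp_adj_def by (simp add: scalar_prod_def)
  also have "\<dots> = (\<Sum>l\<in>{0..<n} - {i}. real (card {e\<in>E. i \<in> e \<and> l \<in> e}))"
    using i unfolding hyp_adj_def by (simp add: sum.remove[of "{0..<n}" i])
  also have "\<dots> = real (r * (k - 1))"
    unfolding of_nat_sum[symmetric] kr_regular_codegree_sum[OF reg i] ..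
  finally show "(hyp_adj n E * ones_mat n 1) $$ (i, j) = (real (r * (k - 1)) \<cdot>\<^sub>m ones_mat n 1) $$ (i, j)"
    using i j unfolding ones_mat_def by simp
qed (simp_all add: hyp_adj_def)

lemma corona_iter_carrier:
  assumes "A \<in> carrier_mat n n"
  shows "corona_iter A b m \<in> carrier_mat (n * (n + 1) ^ m) (n * (n + 1) ^ m)"
proof (induction m)
  case (Suc m)
  have "n * (n + 1) ^ m + n * (n * (n + 1) ^ m) = n * (n + 1) ^ Suc m"
    by (simp add: algebra_simps)
  then show ?case
    unfolding corona_iter_Suc_corona_mat using corona_mat_carrier[OF Suc assms, of b] by simp
qed (use assms in simp)

lemma image_mset_sum: "image_mset f (\<Sum>i\<in>A. X i) = (\<Sum>i\<in>A. image_mset f (X i))"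
  by (induction A rule: infinite_finite_induct) auto

lemma repeat_mset_sum: "repeat_mset c (\<Sum>i\<in>A. X i) = (\<Sum>i\<in>A. repeat_mset c (X i))"
  by (induction A rule: infinite_finite_induct) auto

lemma image_mset_repeat_mset: "image_mset f (repeat_mset c X) = repeat_mset c (image_mset f X)"
  by (induction c) auto

lemma sum_mset_pairs: "(\<Sum>y\<in>#M. {#f y, g y#}) = image_mset f M + image_mset g M"
  by (induction M) auto

lemma Phi_0_sum_mset: "(\<Sum>y\<in>#M. Phi fp fm 0 y) = M"
  by (induction M) auto

lemma Phi_Suc_image_mset:
  "Phi fp fm (Suc j) x = image_mset fp (Phi fp fm j x) + image_mset fm (Phi fp fm j x)"
  by (simp add: sum_mset_pairs)

lemma Phi_Suc_sum_mset:
  "image_mset fp (\<Sum>y\<in>#M. Phi fp fm j y) + image_mset fm (\<Sum>y\<in>#M. Phi fp fm j y)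
     = (\<Sum>y\<in>#M. Phi fp fm (Suc j) y)"
  by (induction M) (simp_all add: Phi_Suc_image_mset add_ac del: Phi.simps(2))

lemma is_spectrum_corona_iter:
  fixes A :: "real mat" and b :: real
  assumes A: "A \<in> carrier_mat n n" and row: "A * ones_mat n 1 = lam \<cdot>\<^sub>m ones_mat n 1"
    and spec: "is_spectrum A (add_mset lam L)"
  defines "fp \<equiv> \<lambda>y. (y + lam + sqrt ((y - lam)\<^sup>2 + 4 * real n * b\<^sup>2)) / 2"
    and "fm \<equiv> \<lambda>y. (y + lam - sqrt ((y - lam)\<^sup>2 + 4 * real n * b\<^sup>2)) / 2"
  shows "is_spectrum (corona_iter A b m)
    ((\<Sum>y\<in>#add_mset lam L. Phi fp fm m y)
     + (\<Sum>j<m. repeat_mset (n * (n + 1) ^ (m - j - 1)) (\<Sum>y\<in>#L. Phi fp fm j y)))"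
proof (induction m)
  case 0
  then show ?case using spec by simp
next
  case (Suc m)
  define S where "S = (\<Sum>y\<in>#add_mset lam L. Phi fp fm m y)
     + (\<Sum>j<m. repeat_mset (n * (n + 1) ^ (m - j - 1)) (\<Sum>y\<in>#L. Phi fp fm j y))"
  have char_poly: "char_poly (corona_iter A b (Suc m)) =
      (\<Prod>a\<in>#image_mset fp S + image_mset fm S + repeat_mset (n * (n + 1) ^ m) L. [:- a, 1:])"
    unfolding corona_iter_Suc_corona_mat fp_def fm_def
    using Suc.IH spec
    by (intro char_poly_corona_mat[OF corona_iter_carrier[OF A] A row]) (simp_all add: is_spectrum_def S_def)
  have image_S: "image_mset fp S + image_mset fm S = (\<Sum>y\<in>#add_mset lam L. Phi fp fm (Suc m) y)
      + (\<Sum>j<m. repeat_mset (n * (n + 1) ^ (m - j - 1)) (\<Sum>y\<in>#L. Phi fp fm (Suc j) y))"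
    unfolding S_def image_mset_union image_mset_sum image_mset_repeat_mset Phi_Suc_sum_mset[symmetric]
      repeat_mset_distrib2 sum.distrib
    by (simp only: add_ac)
  have shift: "(\<Sum>j<Suc m. repeat_mset (n * (n + 1) ^ (Suc m - j - 1)) (\<Sum>y\<in>#L. Phi fp fm j y))
      = repeat_mset (n * (n + 1) ^ m) L
        + (\<Sum>j<m. repeat_mset (n * (n + 1) ^ (m - j - 1)) (\<Sum>y\<in>#L. Phi fp fm (Suc j) y))"
    unfolding sum.lessThan_Suc_shift Phi_0_sum_mset by (simp del: Phi.simps(2))
  show ?case
    unfolding is_spectrum_def char_poly image_S shift by (simp only: add_ac)
qed

lemma mset_eq_sum_nth: "mset xs = (\<Sum>i<length xs. {#xs ! i#})"
  by (induction xs) (simp_all add: sum.lessThan_Suc_shift del: sum.lessThan_Suc)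

lemma sum_mset_sum_singletons: "(\<Sum>y\<in>#(\<Sum>i\<in>I. {#g i#}). f y) = (\<Sum>i\<in>I. f (g i))"
  by (induction I rule: infinite_finite_induct) auto

theorem theorem5p1:
  fixes n k r :: nat and E :: "nat set set" and lam :: "real list"
  assumes reg: "kr_regular k r n E"
    and len: "length lam = n"
    and lam1: "lam ! 0 = real (r * (k - 1))"
    and spec: "is_spectrum (hyp_adj n E) (mset lam)"
  defines "b \<equiv> real ((n - 1) choose (k - 2))"
  defines "\<phi>p \<equiv> (\<lambda>x::real. (x + real (r * (k - 1)) + sqrt ((x - real (r * (k - 1)))\<^sup>2 + 4 * real n * b\<^sup>2)) / 2)"
  defines "\<phi>m \<equiv> (\<lambda>x::real. (x + real (r * (k - 1)) - sqrt ((x - real (r * (k - 1)))\<^sup>2 + 4 * real n * b\<^sup>2)) / 2)"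
  assumes m: "m \<ge> 1"
  shows "is_spectrum (corona_iter (hyp_adj n E) b (m - 1))
           ((\<Sum>i<n. Phi \<phi>p \<phi>m (m - 1) (lam ! i))
            + (\<Sum>j<m - 1. \<Sum>i\<in>{1..<n}. repeat_mset (n * (n + 1) ^ (m - j - 2)) (Phi \<phi>p \<phi>m j (lam ! i))))"
proof (cases "n = 0")
  case True
  \<comment> \<open>all matrices are empty; the general lemma does not apply since \<open>lam ! 0\<close> is junk\<close>
  then have "corona_iter (hyp_adj n E) b (m - 1) \<in> carrier_mat 0 0"
    using corona_iter_carrier[OF hyp_adj_carrier, of n E b "m - 1"] by simp
  then show ?thesis
    using True unfolding is_spectrum_def char_poly_def by (simp add: det_dim_zero char_poly_matrix_closed)
next
  case False
  define L where "L = (\<Sum>i\<in>{1..<n}. {#lam ! i#})"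
  have "{..<n} = insert 0 {1..<n}"
    using False by auto
  then have mset_lam: "mset lam = add_mset (real (r * (k - 1))) L"
    unfolding mset_eq_sum_nth len L_def using lam1 by simp
  have "is_spectrum (corona_iter (hyp_adj n E) b (m - 1))
      ((\<Sum>y\<in>#mset lam. Phi \<phi>p \<phi>m (m - 1) y)
       + (\<Sum>j<m - 1. repeat_mset (n * (n + 1) ^ (m - 1 - j - 1)) (\<Sum>y\<in>#L. Phi \<phi>p \<phi>m j y)))"
    using spec unfolding mset_lam \<phi>p_def \<phi>m_def
    by (rule is_spectrum_corona_iter[OF hyp_adj_carrier hyp_adj_mult_ones[OF reg]])
  moreover have "(\<Sum>y\<in>#mset lam. Phi \<phi>p \<phi>m (m - 1) y) = (\<Sum>i<n. Phi \<phi>p \<phi>m (m - 1) (lam ! i))"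
    unfolding mset_eq_sum_nth sum_mset_sum_singletons len ..
  moreover have "m - 1 - j - 1 = m - j - 2" for j
    by simp
  ultimately show ?thesis
    unfolding L_def sum_mset_sum_singletons repeat_mset_sum by simp
qed

end
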